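(* Let $p:\mathbb{N}\to[0,1]$ satisfy density ($p(n)\to\tilde p>0$), root growth ($p(n)=Kn^{-\beta}$, $K>0$, $0<\beta<1$) or logarithmic growth ($p(n)=K\log(n)/n$, $K>0$). Then for every $k\in\mathbb{N}$ and every $\epsilon,\delta,\theta>0$ there is $N\in\mathbb{N}$ such that for all $n\ge N$, with probability at least $1-\theta$ over $G\sim\mathrm{ER}(n,p(n))$, the proportion of nodes $v$ with $\|\mathrm{rw}_k(v)\|<\epsilon$ is at least $1-\delta$.
   Context: $\mathrm{ER}(n,p)$ is the Erdős–Rényi random graph. For a node $v$, $\mathrm{rw}_k(v)\in\mathbb{R}^k$ is the vector whose $j$-th entry ($1\le j\le k$) is the probability that a simple random walk of $j$ steps started at $v$ is at $v$ after $j$ steps ($\mathrm{rw}_k(v)=0$ if $v$ is isolated). *)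

theory Defs
  imports "HOL-Probability.Probability"
begin

text \<open>A graph on the vertex set {0..<n} is encoded by its edge indicator
  on ordered pairs (i,j) with i < j < n; outside that set the value is False.\<close>

definition er_pairs :: "nat \<Rightarrow> (nat \<times> nat) set" where
  "er_pairs n = {(i, j). i < j \<and> j < n}"

definition ER :: "nat \<Rightarrow> real \<Rightarrow> (nat \<times> nat \<Rightarrow> bool) pmf" where
  "ER n q = Pi_pmf (er_pairs n) False (\<lambda>_. bernoulli_pmf q)"

definition adj :: "(nat \<times> nat \<Rightarrow> bool) \<Rightarrow> nat \<Rightarrow> nat \<Rightarrow> bool" where
  "adj G u w = (if u < w then G (u, w) else if w < u then G (w, u) else False)"

definition degree :: "nat \<Rightarrow> (nat \<times> nat \<Rightarrow> bool) \<Rightarrow> nat \<Rightarrow> nat" where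
  "degree n G u = card {w. w < n \<and> adj G u w}"

text \<open>Transition probability of the simple random walk (zero row at isolated vertices).\<close>
definition trans :: "nat \<Rightarrow> (nat \<times> nat \<Rightarrow> bool) \<Rightarrow> nat \<Rightarrow> nat \<Rightarrow> real" where
  "trans n G u w = (if adj G u w then 1 / real (degree n G u) else 0)"

fun walk_dist :: "nat \<Rightarrow> (nat \<times> nat \<Rightarrow> bool) \<Rightarrow> nat \<Rightarrow> nat \<Rightarrow> nat \<Rightarrow> real" where
  "walk_dist n G v 0 w = (if w = v then 1 else 0)"
| "walk_dist n G v (Suc t) w = (\<Sum>u<n. walk_dist n G v t u * trans n G u w)"

definition rw_entry :: "nat \<Rightarrow> (nat \<times> nat \<Rightarrow> bool) \<Rightarrow> nat \<Rightarrow> nat \<Rightarrow> real" where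
  "rw_entry n G v j = (if degree n G v = 0 then 0 else walk_dist n G v j v)"

definition rw_norm :: "nat \<Rightarrow> (nat \<times> nat \<Rightarrow> bool) \<Rightarrow> nat \<Rightarrow> nat \<Rightarrow> real" where
  "rw_norm n G k v = sqrt (\<Sum>j\<in>{1..k}. (rw_entry n G v j)\<^sup>2)"

end

theory Submission
  imports Defs "HOL-Real_Asymp.Real_Asymp"
begin

text \<open>If every neighbour of v has degree at least D, each step of the walk enters v with
  probability at most 1/D, so every return probability is at most 1/D and the norm of
  rw_k(v) is at most sqrt k / D. A vertex of degree below D spoils only its fewer than D
  neighbours, so it suffices that at most a fraction delta/D of the vertices have degree
  below D. Their number is at most 2^D times the sum of 2^(-deg u), whose expectation is
  n (1 - p/2)^(n-1) by independence of the edges; (1 - p/2)^(n-1) tends to 0 because the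
  expected degree p(n) (n-1) tends to infinity in all three regimes, and Markov's
  inequality concludes.\<close>

lemma trans_nonneg: "trans n G u w \<ge> 0"
  by (simp add: trans_def)

lemma sum_trans_le_1: "(\<Sum>w<n. trans n G u w) \<le> 1"
proof -
  have "(\<Sum>w<n. trans n G u w) = (\<Sum>w\<in>{w. w < n \<and> adj G u w}. 1 / real (degree n G u))"
    unfolding trans_def by (rule sum.mono_neutral_cong_right) auto
  also have "\<dots> = real (degree n G u) * (1 / real (degree n G u))"
    by (simp add: degree_def)
  also have "\<dots> \<le> 1"
    by (cases "degree n G u = 0") auto
  finally show ?thesis .
qed

lemma walk_dist_nonneg: "walk_dist n G v t w \<ge> 0"
  by (induction t arbitrary: w) (auto intro!: sum_nonneg mult_nonneg_nonneg simp: trans_nonneg)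

lemma sum_walk_dist_le_1:
  assumes "v < n"
  shows "(\<Sum>w<n. walk_dist n G v t w) \<le> 1"
proof (induction t)
  case 0
  then show ?case using assms by simp
next
  case (Suc t)
  have "(\<Sum>w<n. walk_dist n G v (Suc t) w) = (\<Sum>u<n. \<Sum>w<n. walk_dist n G v t u * trans n G u w)"
    unfolding walk_dist.simps by (rule sum.swap)
  also have "\<dots> = (\<Sum>u<n. walk_dist n G v t u * (\<Sum>w<n. trans n G u w))"
    by (simp add: sum_distrib_left)
  also have "\<dots> \<le> (\<Sum>u<n. walk_dist n G v t u)"
    by (intro sum_mono mult_right_le_one_le walk_dist_nonneg sum_trans_le_1 sum_nonneg trans_nonneg)
  finally show ?case using Suc by linarith
qed

lemma walk_dist_return_le:
  assumes "v < n" "D > 0" and nbr_degree: "\<And>u. u < n \<Longrightarrow> adj G u v \<Longrightarrow> degree n G u \<ge> D"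
  shows "walk_dist n G v (Suc t) v \<le> 1 / real D"
proof -
  have "trans n G u v \<le> 1 / real D" if "u \<in> {..<n}" for u
    using \<open>D > 0\<close> nbr_degree[of u] that by (auto simp: trans_def intro!: divide_left_mono)
  then have "walk_dist n G v (Suc t) v \<le> (\<Sum>u<n. walk_dist n G v t u * (1 / real D))"
    unfolding walk_dist.simps by (intro sum_mono mult_left_mono walk_dist_nonneg)
  also have "\<dots> = (\<Sum>u<n. walk_dist n G v t u) * (1 / real D)"
    by (rule sum_distrib_right[symmetric])
  also have "\<dots> \<le> 1 / real D"
    using sum_walk_dist_le_1[OF \<open>v < n\<close>]
    by (intro mult_left_le_one_le sum_nonneg walk_dist_nonneg) auto
  finally show ?thesis .
qed

lemma rw_norm_le:
  assumes "v < n" "D > 0" "\<And>u. u < n \<Longrightarrow> adj G u v \<Longrightarrow> degree n G u \<ge> D"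
  shows "rw_norm n G k v \<le> sqrt (real k) / real D"
proof -
  have "(rw_entry n G v j)\<^sup>2 \<le> (1 / real D)\<^sup>2" if j: "j \<in> {1..k}" for j
  proof -
    obtain t where "j = Suc t" using j by (cases j) auto
    then show ?thesis
      using walk_dist_return_le[OF assms, of t] walk_dist_nonneg[of n G v j v]
      by (auto simp: rw_entry_def intro!: power_mono)
  qed
  then have "rw_norm n G k v \<le> sqrt (\<Sum>j\<in>{1..k}. (1 / real D)\<^sup>2)"
    unfolding rw_norm_def by (intro real_sqrt_le_mono sum_mono)
  also have "\<dots> = sqrt (real k) / real D"
    using \<open>D > 0\<close> by (simp add: real_sqrt_mult real_sqrt_divide power_divide)
  finally show ?thesis .
qed

definition low_degree :: "nat \<Rightarrow> (nat \<times> nat \<Rightarrow> bool) \<Rightarrow> nat \<Rightarrow> nat set" where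
  "low_degree n G D = {u. u < n \<and> degree n G u < D}"

lemma finite_low_degree: "finite (low_degree n G D)"
  by (simp add: low_degree_def)

lemma card_small_rw_norm_ge:
  assumes "D > 0" "sqrt (real k) / real D < \<epsilon>"
  shows "real n - real D * real (card (low_degree n G D))
         \<le> real (card {v. v < n \<and> rw_norm n G k v < \<epsilon>})"
proof -
  define Bad where "Bad = (\<Union>u\<in>low_degree n G D. {v. v < n \<and> adj G u v})"
  have Bad_sub: "Bad \<subseteq> {..<n}"
    unfolding Bad_def by auto
  have good: "{..<n} - Bad \<subseteq> {v. v < n \<and> rw_norm n G k v < \<epsilon>}"
  proof
    fix v assume v: "v \<in> {..<n} - Bad"
    have "rw_norm n G k v \<le> sqrt (real k) / real D"
      using v \<open>D > 0\<close> by (intro rw_norm_le) (force simp: Bad_def low_degree_def)+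
    then show "v \<in> {v. v < n \<and> rw_norm n G k v < \<epsilon>}"
      using v assms(2) by auto
  qed
  have "card Bad \<le> (\<Sum>u\<in>low_degree n G D. card {v. v < n \<and> adj G u v})"
    unfolding Bad_def by (rule card_UN_le[OF finite_low_degree])
  also have "\<dots> \<le> (\<Sum>u\<in>low_degree n G D. D)"
    by (intro sum_mono) (auto simp: low_degree_def degree_def)
  finally have "real (card Bad) \<le> real D * real (card (low_degree n G D))"
    by (simp add: mult.commute of_nat_le_iff[symmetric, where 'a=real])
  moreover have "n - card Bad = card ({..<n} - Bad)"
    using Bad_sub by (simp add: card_Diff_subset finite_subset)
  moreover have "\<dots> \<le> card {v. v < n \<and> rw_norm n G k v < \<epsilon>}"
    using good by (intro card_mono) auto
  ultimately show ?thesis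
    by linarith
qed

lemma card_low_degree_le:
  "real (card (low_degree n G D)) \<le> 2 ^ D * (\<Sum>u<n. (1/2::real) ^ degree n G u)"
proof -
  have "real (card (low_degree n G D)) * (1/2) ^ D = (\<Sum>u\<in>low_degree n G D. (1/2::real) ^ D)"
    by simp
  also have "\<dots> \<le> (\<Sum>u\<in>low_degree n G D. (1/2::real) ^ degree n G u)"
    by (intro sum_mono power_decreasing) (auto simp: low_degree_def)
  also have "\<dots> \<le> (\<Sum>u<n. (1/2::real) ^ degree n G u)"
    by (intro sum_mono2) (auto simp: low_degree_def)
  finally show ?thesis
    by (simp add: field_simps power_divide)
qed

lemma finite_er_pairs: "finite (er_pairs n)"
  by (rule finite_subset[of _ "{..<n} \<times> {..<n}"]) (auto simp: er_pairs_def)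

lemma card_incident_pairs:
  assumes "u < n"
  shows "card {e \<in> er_pairs n. (fst e = u \<or> snd e = u) \<and> R e}
       = card {w. w < n \<and> w \<noteq> u \<and> R (min u w, max u w)}"
proof -
  let ?W = "{w. w < n \<and> w \<noteq> u \<and> R (min u w, max u w)}"
  have "inj_on (\<lambda>w. (min u w, max u w)) ?W"
    by (rule inj_on_inverseI[of _ "\<lambda>e. fst e + snd e - u"]) (simp add: min_def max_def)
  moreover have "{e \<in> er_pairs n. (fst e = u \<or> snd e = u) \<and> R e} = (\<lambda>w. (min u w, max u w)) ` ?W"
  proof (intro set_eqI iffI)
    fix e assume "e \<in> {e \<in> er_pairs n. (fst e = u \<or> snd e = u) \<and> R e}"
    then obtain i j where e: "e = (i, j)" "i < j" "j < n" "i = u \<or> j = u" "R (i, j)"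
      by (auto simp: er_pairs_def)
    show "e \<in> (\<lambda>w. (min u w, max u w)) ` ?W"
    proof (cases "i = u")
      case True
      then have "min u j = i" "max u j = j"
        using e by simp_all
      with e show ?thesis
        by (intro image_eqI[of _ _ j]) simp_all
    next
      case False
      then have "min u i = i" "max u i = j"
        using e by simp_all
      with e False show ?thesis
        by (intro image_eqI[of _ _ i]) simp_all
    qed
  next
    fix e assume "e \<in> (\<lambda>w. (min u w, max u w)) ` ?W"
    then obtain w where w: "e = (min u w, max u w)" "w < n" "w \<noteq> u" "R e"
      by auto
    then have "min u w < max u w" "max u w < n"
      using \<open>u < n\<close> by simp_all
    with w show "e \<in> {e \<in> er_pairs n. (fst e = u \<or> snd e = u) \<and> R e}"
      by (auto simp: er_pairs_def min_def)
  qed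
  ultimately show ?thesis
    by (simp add: card_image)
qed

lemma expectation_half_power_degree:
  assumes "u < n" "0 \<le> q" "q \<le> 1"
  shows "measure_pmf.expectation (ER n q) (\<lambda>G. (1/2::real) ^ degree n G u) = (1 - q/2) ^ (n - 1)"
proof -
  define I where "I = {e \<in> er_pairs n. fst e = u \<or> snd e = u}"
  define f where "f = (\<lambda>e b. if e \<in> I \<and> b then 1/2 else (1::real))"
  have "(1/2::real) ^ degree n G u = (\<Prod>e\<in>er_pairs n. f e (G e))" for G
  proof -
    have "{w. w < n \<and> w \<noteq> u \<and> G (min u w, max u w)} = {w. w < n \<and> adj G u w}"
      by (auto simp: adj_def min_def max_def split: if_splits)
    then have "degree n G u = card {e \<in> er_pairs n. e \<in> I \<and> G e}"
      using card_incident_pairs[OF \<open>u < n\<close>, of G] by (simp add: degree_def I_def)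
    then show ?thesis
      by (simp add: f_def prod.inter_filter[OF finite_er_pairs, symmetric])
  qed
  then have "measure_pmf.expectation (ER n q) (\<lambda>G. (1/2::real) ^ degree n G u)
      = measure_pmf.expectation (ER n q) (\<lambda>G. \<Prod>e\<in>er_pairs n. f e (G e))"
    by simp
  also have "\<dots> = (\<Prod>e\<in>er_pairs n. measure_pmf.expectation (bernoulli_pmf q) (f e))"
    unfolding ER_def
    by (rule expectation_prod_Pi_pmf[OF finite_er_pairs]) (auto simp: f_def integrable_measure_pmf_finite)
  also have "\<dots> = (\<Prod>e\<in>er_pairs n. if e \<in> I then 1 - q/2 else 1)"
    using assms by (intro prod.cong refl) (simp add: f_def)
  also have "\<dots> = (1 - q/2) ^ card I"
    by (simp add: prod.If_cases[OF finite_er_pairs] I_def Int_def)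
  also have "card I = card ({..<n} - {u})"
    using card_incident_pairs[OF \<open>u < n\<close>, of "\<lambda>_. True"] by (simp add: I_def set_diff_eq)
  also have "\<dots> = n - 1"
    using \<open>u < n\<close> by simp
  finally show ?thesis .
qed

lemma prob_card_low_degree_ge:
  assumes "0 \<le> q" "q \<le> 1" "c > 0"
  shows "measure_pmf.prob (ER n q) {G. c \<le> real (card (low_degree n G D))}
         \<le> 2 ^ D * real n * (1 - q/2) ^ (n - 1) / c"
proof -
  define Y where "Y = (\<lambda>G. 2 ^ D * (\<Sum>u<n. (1/2::real) ^ degree n G u))"
  have integrable: "integrable (measure_pmf (ER n q)) (\<lambda>G. (1/2::real) ^ degree n G u)" for u
    by (intro measure_pmf.integrable_const_bound[where B=1]) (auto intro!: AE_I2 power_le_one)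
  have "measure_pmf.prob (ER n q) {G. c \<le> real (card (low_degree n G D))}
      \<le> measure_pmf.prob (ER n q) {G. c \<le> Y G}"
    using card_low_degree_le unfolding Y_def
    by (intro measure_pmf.finite_measure_mono) (auto intro: order_trans)
  also have "\<dots> \<le> measure_pmf.expectation (ER n q) Y / c"
    using integral_Markov_inequality_measure[of "measure_pmf (ER n q)" Y "{}" c] \<open>c > 0\<close>
    unfolding Y_def by (simp add: integrable sum_nonneg)
  also have "measure_pmf.expectation (ER n q) Y = 2 ^ D * real n * (1 - q/2) ^ (n - 1)"
    unfolding Y_def using assms
    by (simp add: Bochner_Integration.integral_sum integrable expectation_half_power_degree)
  finally show ?thesis .
qed

lemma prob_many_small_rw_norm_ge:
  assumes "0 \<le> q" "q \<le> 1" "\<delta> > 0" "n > 0" "D > 0" "sqrt (real k) / real D < \<epsilon>"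
  shows "1 - real D * 2 ^ D * (1 - q/2) ^ (n - 1) / \<delta>
    \<le> measure_pmf.prob (ER n q) {G. real (card {v. v < n \<and> rw_norm n G k v < \<epsilon>}) \<ge> (1 - \<delta>) * real n}"
proof -
  define c where "c = \<delta> * real n / real D"
  define Many_low where "Many_low = {G. c \<le> real (card (low_degree n G D))}"
  have "c > 0"
    using assms by (simp add: c_def)
  have "measure_pmf.prob (ER n q) Many_low \<le> 2 ^ D * real n * (1 - q/2) ^ (n - 1) / c"
    unfolding Many_low_def using assms \<open>c > 0\<close> by (intro prob_card_low_degree_ge)
  also have "\<dots> = real D * 2 ^ D * (1 - q/2) ^ (n - 1) / \<delta>"
    using assms by (simp add: c_def field_simps)
  finally have "1 - real D * 2 ^ D * (1 - q/2) ^ (n - 1) / \<delta> \<le> measure_pmf.prob (ER n q) (UNIV - Many_low)"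
    using measure_pmf.prob_compl[of Many_low "ER n q"] by simp
  also have "\<dots> \<le> measure_pmf.prob (ER n q)
      {G. real (card {v. v < n \<and> rw_norm n G k v < \<epsilon>}) \<ge> (1 - \<delta>) * real n}"
  proof (rule measure_pmf.finite_measure_mono)
    show "UNIV - Many_low \<subseteq> {G. real (card {v. v < n \<and> rw_norm n G k v < \<epsilon>}) \<ge> (1 - \<delta>) * real n}"
    proof
      fix G assume "G \<in> UNIV - Many_low"
      then have "real D * real (card (low_degree n G D)) < \<delta> * real n"
        using \<open>D > 0\<close> by (auto simp: Many_low_def c_def field_simps)
      then show "G \<in> {G. real (card {v. v < n \<and> rw_norm n G k v < \<epsilon>}) \<ge> (1 - \<delta>) * real n}"
        using card_small_rw_norm_ge[OF \<open>D > 0\<close> \<open>sqrt (real k) / real D < \<epsilon>\<close>, of n G]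
        by (simp add: algebra_simps)
    qed
  qed simp
  finally show ?thesis .
qed

lemma one_minus_power_le_exp:
  assumes "x \<le> 1"
  shows "(1 - x) ^ m \<le> exp (- (x * real m))"
proof -
  have "(1 - x) ^ m \<le> exp (- x) ^ m"
    using assms exp_ge_add_one_self[of "-x"] by (intro power_mono) auto
  also have "\<dots> = exp (- (x * real m))"
    by (simp add: exp_of_nat_mult[symmetric] mult.commute)
  finally show ?thesis .
qed

lemma expected_degree_at_top:
  fixes p :: "nat \<Rightarrow> real"
  assumes "(\<exists>pt. pt > 0 \<and> p \<longlonglongrightarrow> pt)
       \<or> (\<exists>K \<beta>. K > 0 \<and> 0 < \<beta> \<and> \<beta> < 1 \<and>
             (\<forall>\<^sub>F n in sequentially. p n = K * real n powr (-\<beta>)))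
       \<or> (\<exists>K. K > 0 \<and> (\<forall>\<^sub>F n in sequentially. p n = K * ln (real n) / real n))"
  shows "filterlim (\<lambda>n. p n * (real n - 1)) at_top sequentially"
  using assms
proof (elim disjE exE conjE)
  fix pt assume "pt > 0" "p \<longlonglongrightarrow> pt"
  have "filterlim (\<lambda>n::nat. real n - 1) at_top sequentially"
    by real_asymp
  then show ?thesis
    by (rule filterlim_tendsto_pos_mult_at_top[OF \<open>p \<longlonglongrightarrow> pt\<close> \<open>pt > 0\<close>])
next
  fix K \<beta> :: real assume "K > 0" "0 < \<beta>" "\<beta> < 1"
    and p: "\<forall>\<^sub>F n in sequentially. p n = K * real n powr (-\<beta>)"
  have ev: "\<forall>\<^sub>F n in sequentially. K * real n powr (-\<beta>) * (real n - 1) = p n * (real n - 1)"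
    using p by eventually_elim simp
  have "filterlim (\<lambda>n::nat. K * real n powr (-\<beta>) * (real n - 1)) at_top sequentially"
    using \<open>K > 0\<close> \<open>\<beta> < 1\<close> by real_asymp
  with ev show ?thesis
    by (rule iffD1[OF filterlim_cong[OF refl refl]])
next
  fix K :: real assume "K > 0"
    and p: "\<forall>\<^sub>F n in sequentially. p n = K * ln (real n) / real n"
  have ev: "\<forall>\<^sub>F n in sequentially. K * ln (real n) / real n * (real n - 1) = p n * (real n - 1)"
    using p by eventually_elim simp
  have "filterlim (\<lambda>n::nat. K * ln (real n) / real n * (real n - 1)) at_top sequentially"
    using \<open>K > 0\<close> by real_asymp
  with ev show ?thesis
    by (rule iffD1[OF filterlim_cong[OF refl refl]])
qed

lemma power_one_minus_half_tendsto_0: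
  fixes p :: "nat \<Rightarrow> real"
  assumes "\<And>n. 0 \<le> p n \<and> p n \<le> 1"
    and "filterlim (\<lambda>n. p n * (real n - 1)) at_top sequentially"
  shows "(\<lambda>n. (1 - p n / 2) ^ (n - 1)) \<longlonglongrightarrow> 0"
proof (rule tendsto_sandwich)
  have "0 \<le> 1 - p n / 2" for n
    using assms(1)[of n] by simp
  then show "\<forall>\<^sub>F n in sequentially. 0 \<le> (1 - p n / 2) ^ (n - 1)"
    by (auto intro: always_eventually)
  show "\<forall>\<^sub>F n in sequentially. (1 - p n / 2) ^ (n - 1) \<le> exp (- (p n * (real n - 1) / 2))"
    using eventually_ge_at_top[of "1::nat"]
  proof eventually_elim
    case (elim n)
    then show ?case
      using one_minus_power_le_exp[of "p n / 2" "n - 1"] assms(1)[of n] by (simp add: of_nat_diff)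
  qed
  have "filterlim (\<lambda>n. p n * (real n - 1) * (1 / 2)) at_top sequentially"
    by (rule filterlim_at_top_mult_tendsto_pos[OF tendsto_const _ assms(2)]) simp
  then show "(\<lambda>n. exp (- (p n * (real n - 1) / 2))) \<longlonglongrightarrow> 0"
    using filterlim_compose[OF exp_at_bot filterlim_compose[OF filterlim_uminus_at_bot_at_top]]
    by simp
qed simp

theorem mainTheorem5:
  fixes p :: "nat \<Rightarrow> real"
  assumes p_range: "\<And>n. 0 \<le> p n \<and> p n \<le> 1"
    and growth:
      "(\<exists>pt. pt > 0 \<and> p \<longlonglongrightarrow> pt)
       \<or> (\<exists>K \<beta>. K > 0 \<and> 0 < \<beta> \<and> \<beta> < 1 \<and>
             (\<forall>\<^sub>F n in sequentially. p n = K * real n powr (-\<beta>)))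
       \<or> (\<exists>K. K > 0 \<and> (\<forall>\<^sub>F n in sequentially. p n = K * ln (real n) / real n))"
  shows "\<forall>(k::nat) (\<epsilon>::real) (\<delta>::real) (\<theta>::real). \<epsilon> > 0 \<longrightarrow> \<delta> > 0 \<longrightarrow> \<theta> > 0 \<longrightarrow>
           (\<exists>N::nat. \<forall>n\<ge>N.
              measure_pmf.prob (ER n (p n))
                {G. real (card {v. v < n \<and> rw_norm n G k v < \<epsilon>}) \<ge> (1 - \<delta>) * real n}
              \<ge> 1 - \<theta>)"
proof (intro allI impI)
  fix k :: nat and \<epsilon> \<delta> \<theta> :: real
  assume "\<epsilon> > 0" "\<delta> > 0" "\<theta> > 0"
  obtain D :: nat where D: "sqrt (real k) / \<epsilon> < real D"
    using reals_Archimedean2 by blast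
  moreover have "0 \<le> sqrt (real k) / \<epsilon>"
    using \<open>\<epsilon> > 0\<close> by simp
  ultimately have "D > 0"
    by linarith
  with D have D_large: "sqrt (real k) / real D < \<epsilon>"
    using \<open>\<epsilon> > 0\<close> by (simp add: field_simps)
  have "\<forall>\<^sub>F n in sequentially. (1 - p n / 2) ^ (n - 1) < \<theta> * \<delta> / (real D * 2 ^ D)"
    using power_one_minus_half_tendsto_0[OF p_range expected_degree_at_top[OF growth]]
      \<open>\<theta> > 0\<close> \<open>\<delta> > 0\<close> \<open>D > 0\<close> by (simp add: order_tendstoD)
  then have "\<forall>\<^sub>F n in sequentially. 1 - \<theta> \<le> measure_pmf.prob (ER n (p n))
      {G. real (card {v. v < n \<and> rw_norm n G k v < \<epsilon>}) \<ge> (1 - \<delta>) * real n}"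
    using eventually_gt_at_top[of 0]
  proof eventually_elim
    case (elim n)
    have "1 - \<theta> \<le> 1 - real D * 2 ^ D * (1 - p n / 2) ^ (n - 1) / \<delta>"
      using elim \<open>\<delta> > 0\<close> \<open>D > 0\<close> by (simp add: field_simps)
    also have "\<dots> \<le> measure_pmf.prob (ER n (p n))
        {G. real (card {v. v < n \<and> rw_norm n G k v < \<epsilon>}) \<ge> (1 - \<delta>) * real n}"
      using p_range[of n] elim \<open>\<delta> > 0\<close> \<open>D > 0\<close> D_large by (intro prob_many_small_rw_norm_ge) auto
    finally show ?case .
  qed
  then show "\<exists>N. \<forall>n\<ge>N. measure_pmf.prob (ER n (p n))
      {G. real (card {v. v < n \<and> rw_norm n G k v < \<epsilon>}) \<ge> (1 - \<delta>) * real n} \<ge> 1 - \<theta>"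
    by (simp add: eventually_sequentially)
qed

end
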